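(* For a positive integer $g$, let $t_g$ denote the number of numerical semigroups $\Lambda$ of genus $g$ satisfying $f(\Lambda)<3m(\Lambda)$. Then for every positive integer $g$, \[ t_g \leq F_{g+1} + \sum_{k = 1}^{g-1} \sum_{A \in \mathcal A_k} F_{g - |(A + A)\cap[0, k]| + |A| - k - 1}. \]
   Context: A numerical semigroup is a subset $\Lambda\subseteq\mathbb{N}_0$ closed under addition, containing $0$, with finite complement in $\mathbb{N}_0$. Its genus is $|\mathbb{N}_0\setminus\Lambda|$, its multiplicity $m(\Lambda)$ is its smallest nonzero element and its Frobenius number $f(\Lambda)$ is the largest element of $\mathbb{N}_0\setminus\Lambda$. For integers $a\le b$, $[a,b]=\{a,\dots,b\}$; $A+A=\{a_1+a_2:a_1,a_2\in A\}$. For a positive integer $k$, $\mathcal A_k = \{A \subseteq [0, k-1] : 0 \in A \text{ and } k \notin A + A\}$. $F_n$ are the Fibonacci numbers, $F_1=F_2=1$, $F_{n+2}=F_{n+1}+F_n$, with the convention $F_n=0$ for all $n\le 0$. *)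

theory Defs
  imports Main "HOL-Number_Theory.Fib"
begin

definition numerical_semigroup :: "nat set \<Rightarrow> bool" where
  "numerical_semigroup L \<longleftrightarrow> 0 \<in> L \<and> (\<forall>a\<in>L. \<forall>b\<in>L. a + b \<in> L) \<and> finite (UNIV - L)"

definition genus :: "nat set \<Rightarrow> nat" where
  "genus L = card (UNIV - L)"

definition multiplicity :: "nat set \<Rightarrow> nat" where
  "multiplicity L = (LEAST x. x \<in> L \<and> x \<noteq> 0)"

definition frobenius :: "nat set \<Rightarrow> nat" where
  "frobenius L = Max (UNIV - L)"

definition sumset :: "nat set \<Rightarrow> nat set" where
  "sumset A = {a1 + a2 | a1 a2. a1 \<in> A \<and> a2 \<in> A}"

definition AA :: "nat \<Rightarrow> nat set set" where
  "AA k = {A. A \<subseteq> {0..k-1} \<and> 0 \<in> A \<and> k \<notin> sumset A}"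

definition F :: "int \<Rightarrow> nat" where
  "F n = (if n \<le> 0 then 0 else fib (nat n))"

definition t :: "nat \<Rightarrow> nat" where
  "t g = card {L. numerical_semigroup L \<and> genus L = g \<and> frobenius L < 3 * multiplicity L}"

end

theory Submission
  imports Defs
begin

text \<open>A semigroup L with f < 2m is determined by m and the set of gaps in (m, 2m), and its
genus is m - 1 plus the number of those gaps. If f = 2m + k with 0 < k < m (f = 2m is impossible,
as 2m is in L), put A = {a < k. m + a \<in> L}. Then A \<in> AA k, since (m + a1) + (m + a2) = f is not
in L, and 2m + (A + A) lies in L. So L is determined by m, the gaps J in (m + k, 2m) and the gaps C
in 2m + ([0, k) - (A + A)), and its genus is (m - 1) + (k - |A|) + |J| + |C| + 2.
In both cases L is encoded injectively by a triple (n, J, C) with J \<subseteq> [0, n) and C \<subseteq> S of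
prescribed weight n + |J| + |C|, and there are at most F (w + |S| + 1) triples of weight w:
lowering n by one (and dropping n - 1 from J if present) reduces the weight by 1 or 2, and so does
dropping a fixed element of S from C, which gives the Fibonacci recursion.\<close>

lemma F_eq_fib_nat: "F n = fib (nat n)"
  by (simp add: F_def)

lemma F_add_le: "F a + F (a + 1) \<le> F (a + 2)"
proof (cases "a \<ge> 0")
  case True
  then have "nat (a + 2) = Suc (Suc (nat a))" "nat (a + 1) = Suc (nat a)" by auto
  then show ?thesis by (simp add: F_eq_fib_nat)
qed (simp add: F_def)

lemma F_mono: "a \<le> b \<Longrightarrow> F a \<le> F b"
  by (simp add: F_eq_fib_nat fib_mono nat_mono)

definition weighted_triples :: "nat set \<Rightarrow> nat \<Rightarrow> (nat \<times> nat set \<times> nat set) set" where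
  "weighted_triples S w = {(n, J, C). J \<subseteq> {..<n} \<and> C \<subseteq> S \<and> n + card J + card C = w}"

lemma finite_weighted_triples:
  assumes "finite S"
  shows "finite (weighted_triples S w)"
proof (rule finite_subset)
  show "weighted_triples S w \<subseteq> {..w} \<times> Pow {..<w} \<times> Pow S"
    by (auto simp: weighted_triples_def)
qed (use assms in auto)

lemma weighted_triples_zero: "finite S \<Longrightarrow> weighted_triples S 0 = {(0, {}, {})}"
  by (auto simp: weighted_triples_def dest: finite_subset)

lemma weighted_triples_empty_one: "weighted_triples {} 1 = {(1, {}, {})}"
proof (intro equalityI subsetI)
  fix p assume "p \<in> weighted_triples {} 1"
  then obtain n J where p: "p = (n, J, {})" and J: "J \<subseteq> {..<n}" and w: "n + card J = 1"
    by (auto simp: weighted_triples_def)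
  have "J = {}"
  proof (rule ccontr)
    assume "J \<noteq> {}"
    moreover have "finite J" using J finite_subset by blast
    ultimately have "card J > 0" "n > 0" using J by (auto simp: card_gt_0_iff)
    then show False using w by linarith
  qed
  then show "p \<in> {(1, {}, {})}" using p w by simp
qed (simp add: weighted_triples_def)

lemma weighted_triples_empty_step:
  assumes "2 \<le> w"
  shows "weighted_triples {} w \<subseteq>
    (\<lambda>(n, J, C). (Suc n, J, C)) ` weighted_triples {} (w - 1) \<union>
    (\<lambda>(n, J, C). (Suc n, insert n J, C)) ` weighted_triples {} (w - 2)"
proof
  fix p assume "p \<in> weighted_triples {} w"
  then obtain n J where p: "p = (n, J, {})" and J: "J \<subseteq> {..<n}" and w: "n + card J = w"
    by (auto simp: weighted_triples_def)
  have "finite J" using J finite_subset by blast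
  obtain n' where n: "n = Suc n'"
    using J w assms by (cases n) auto
  show "p \<in> (\<lambda>(n, J, C). (Suc n, J, C)) ` weighted_triples {} (w - 1) \<union>
    (\<lambda>(n, J, C). (Suc n, insert n J, C)) ` weighted_triples {} (w - 2)"
  proof (cases "n' \<in> J")
    case True
    then have "card J > 0" using \<open>finite J\<close> by (auto simp: card_gt_0_iff)
    then have "(n', J - {n'}, {}) \<in> weighted_triples {} (w - 2)"
      using J w n True \<open>finite J\<close> by (auto simp: weighted_triples_def)
    moreover have "p = (Suc n', insert n' (J - {n'}), {})" using p n True by auto
    ultimately show ?thesis by force
  next
    case False
    then have "(n', J, {}) \<in> weighted_triples {} (w - 1)"
      using J w n by (auto simp: weighted_triples_def less_Suc_eq)
    then show ?thesis using p n by force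
  qed
qed

lemma card_weighted_triples_empty: "card (weighted_triples {} w) \<le> F (int w + 1)"
proof (induction w rule: less_induct)
  case (less w)
  consider "w = 0" | "w = 1" | (step) "2 \<le> w" by linarith
  then show ?case
  proof cases
    case step
    let ?T = "weighted_triples {}"
    have "card (?T w) \<le> card ((\<lambda>(n, J, C). (Suc n, J, C)) ` ?T (w - 1) \<union>
        (\<lambda>(n, J, C). (Suc n, insert n J, C)) ` ?T (w - 2))"
      using weighted_triples_empty_step[OF step]
      by (intro card_mono finite_UnI finite_imageI finite_weighted_triples) auto
    also have "\<dots> \<le> card (?T (w - 1)) + card (?T (w - 2))"
      by (intro card_Un_le[THEN order_trans] add_mono card_image_le finite_weighted_triples) auto
    also have "\<dots> \<le> F (int w) + F (int w - 1)"
      using less[of "w - 1"] less[of "w - 2"] step by (simp add: of_nat_diff)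
    also have "\<dots> \<le> F (int w + 1)"
      using F_add_le[of "int w - 1"] by (simp add: add.commute)
    finally show ?thesis .
  qed (simp_all only: weighted_triples_zero[OF finite.emptyI] weighted_triples_empty_one, simp_all add: F_def)
qed

lemma weighted_triples_insert:
  assumes "finite S" "x \<notin> S"
  shows "weighted_triples (insert x S) w \<subseteq>
    weighted_triples S w \<union> (\<lambda>(n, J, C). (n, J, insert x C)) ` weighted_triples S (w - 1)"
proof
  fix p assume "p \<in> weighted_triples (insert x S) w"
  then obtain n J C where p: "p = (n, J, C)" and J: "J \<subseteq> {..<n}" and C: "C \<subseteq> insert x S"
    and w: "n + card J + card C = w"
    by (auto simp: weighted_triples_def)
  have "finite C" using C assms(1) finite_subset by blast
  show "p \<in> weighted_triples S w \<union> (\<lambda>(n, J, C). (n, J, insert x C)) ` weighted_triples S (w - 1)"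
  proof (cases "x \<in> C")
    case True
    then have "card C > 0" using \<open>finite C\<close> by (auto simp: card_gt_0_iff)
    then have "(n, J, C - {x}) \<in> weighted_triples S (w - 1)"
      using J C w True \<open>finite C\<close> by (auto simp: weighted_triples_def)
    moreover have "p = (n, J, insert x (C - {x}))" using p True by auto
    ultimately show ?thesis by force
  next
    case False
    then show ?thesis using p J C w by (auto simp: weighted_triples_def)
  qed
qed

lemma card_weighted_triples:
  assumes "finite S"
  shows "card (weighted_triples S w) \<le> F (int w + int (card S) + 1)"
  using assms
proof (induction S arbitrary: w rule: finite_induct)
  case empty
  then show ?case using card_weighted_triples_empty by simp
next
  case (insert x S)
  let ?T = "weighted_triples S"
  show ?case
  proof (cases "w = 0")
    case True
    have "F 1 \<le> F (int (card (insert x S)) + 1)" by (rule F_mono) simp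
    then show ?thesis using True insert(1) by (simp add: weighted_triples_zero F_def)
  next
    case False
    have "card (weighted_triples (insert x S) w)
        \<le> card (?T w \<union> (\<lambda>(n, J, C). (n, J, insert x C)) ` ?T (w - 1))"
      using weighted_triples_insert[OF insert(1,2)]
      by (intro card_mono finite_UnI finite_imageI finite_weighted_triples insert(1))
    also have "\<dots> \<le> card (?T w) + card (?T (w - 1))"
      by (intro card_Un_le[THEN order_trans] add_mono card_image_le finite_weighted_triples insert(1)) auto
    also have "\<dots> \<le> F (int w + int (card S) + 1) + F (int w + int (card S))"
      using insert(3)[of w] insert(3)[of "w - 1"] False by (simp add: of_nat_diff)
    also have "\<dots> \<le> F (int w + int (card (insert x S)) + 1)"
      using F_add_le[of "int w + int (card S)"] insert(1,2) by (simp add: ac_simps)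
    finally show ?thesis .
  qed
qed

lemma card_le_F_if_inj_on_weighted_triples:
  assumes "inj_on \<phi> X" "\<phi> ` X \<subseteq> weighted_triples S w" "finite S"
  shows "finite X" "card X \<le> F (int w + int (card S) + 1)"
proof -
  have "finite (\<phi> ` X)"
    using assms(2,3) finite_weighted_triples finite_subset by blast
  then show "finite X" using finite_imageD assms(1) by blast
  have "card X = card (\<phi> ` X)" using assms(1) by (simp add: card_image)
  also have "\<dots> \<le> card (weighted_triples S w)"
    using assms(2,3) by (intro card_mono finite_weighted_triples)
  also have "\<dots> \<le> F (int w + int (card S) + 1)" using assms(3) by (rule card_weighted_triples)
  finally show "card X \<le> F (int w + int (card S) + 1)" .
qed

lemma numerical_semigroup_add:
  "numerical_semigroup L \<Longrightarrow> a \<in> L \<Longrightarrow> b \<in> L \<Longrightarrow> a + b \<in> L"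
  by (simp add: numerical_semigroup_def)

lemma frobenius_notin:
  assumes "numerical_semigroup L" "L \<noteq> UNIV"
  shows "frobenius L \<notin> L"
proof -
  have "frobenius L \<in> UNIV - L"
    unfolding frobenius_def using assms by (intro Max_in) (auto simp: numerical_semigroup_def)
  then show ?thesis by simp
qed

lemma greater_frobenius_in:
  assumes "numerical_semigroup L" "frobenius L < x"
  shows "x \<in> L"
proof (rule ccontr)
  assume "x \<notin> L"
  then have "x \<le> frobenius L"
    unfolding frobenius_def using assms(1) by (intro Max_ge) (auto simp: numerical_semigroup_def)
  then show False using assms(2) by simp
qed

lemma multiplicity_in:
  assumes "numerical_semigroup L"
  shows "multiplicity L \<in> L" "0 < multiplicity L"
proof -
  have "Suc (frobenius L) \<in> L \<and> Suc (frobenius L) \<noteq> 0"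
    using greater_frobenius_in[OF assms] by simp
  then have "multiplicity L \<in> L \<and> multiplicity L \<noteq> 0"
    unfolding multiplicity_def by (rule LeastI)
  then show "multiplicity L \<in> L" "0 < multiplicity L" by auto
qed

lemma less_multiplicity_notin: "0 < x \<Longrightarrow> x < multiplicity L \<Longrightarrow> x \<notin> L"
  unfolding multiplicity_def using not_less_Least by blast

lemma frobenius_neq_twice_multiplicity:
  assumes "numerical_semigroup L" "L \<noteq> UNIV"
  shows "frobenius L \<noteq> 2 * multiplicity L"
proof
  have "multiplicity L + multiplicity L \<in> L"
    using numerical_semigroup_add multiplicity_in(1) assms(1) by blast
  moreover assume "frobenius L = 2 * multiplicity L"
  ultimately show False using frobenius_notin[OF assms] by (simp add: mult_2)
qed

lemma multiplicity_le_genus: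
  assumes "numerical_semigroup L" "L \<noteq> UNIV" "multiplicity L < frobenius L"
  shows "multiplicity L \<le> genus L"
proof -
  have "insert (frobenius L) {1..<multiplicity L} \<subseteq> UNIV - L"
    using frobenius_notin[OF assms(1,2)] less_multiplicity_notin by auto
  then have "card (insert (frobenius L) {1..<multiplicity L}) \<le> genus L"
    unfolding genus_def using assms(1) by (intro card_mono) (auto simp: numerical_semigroup_def)
  moreover have "card (insert (frobenius L) {1..<multiplicity L}) = multiplicity L"
    using assms(3) multiplicity_in(2)[OF assms(1)] by simp
  ultimately show ?thesis by simp
qed

lemma sumset_shift_in:
  assumes "numerical_semigroup L" "A \<subseteq> {a. c + a \<in> L}" "b \<in> sumset A"
  shows "2 * c + b \<in> L"
proof -
  obtain a1 a2 where "b = a1 + a2" "c + a1 \<in> L" "c + a2 \<in> L"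
    using assms(2,3) unfolding sumset_def by blast
  then show ?thesis
    using numerical_semigroup_add[OF assms(1), of "c + a1" "c + a2"] by (simp add: add_ac mult_2)
qed

lemma mem_image_plus_nat: "(x::nat) \<in> (+) c ` S \<longleftrightarrow> c \<le> x \<and> x - c \<in> S"
  by (auto simp: image_iff intro!: bexI[of _ "x - c"])

lemma card_Un_at_split:
  fixes A B :: "nat set"
  assumes "finite A" "finite B" "A \<subseteq> {..<c}" "B \<subseteq> {c..}"
  shows "card (A \<union> B) = card A + card B"
proof (rule card_Un_disjoint)
  show "A \<inter> B = {}" using assms(3,4) by fastforce
qed (use assms in auto)

definition shifted_gaps :: "nat set \<Rightarrow> nat \<Rightarrow> nat \<Rightarrow> nat set" where
  "shifted_gaps L c n = {i. i < n \<and> c + i \<notin> L}"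

lemma shifted_gaps_subset: "shifted_gaps L c n \<subseteq> {..<n}"
  by (auto simp: shifted_gaps_def)

lemma finite_shifted_gaps: "finite (shifted_gaps L c n)"
  by (rule finite_subset[OF shifted_gaps_subset]) simp

definition gaps_below_2m :: "nat \<Rightarrow> nat set \<Rightarrow> nat set" where
  "gaps_below_2m m J = {1..<m} \<union> (+) (m + 1) ` J"

definition gaps_below_3m :: "nat \<Rightarrow> nat \<Rightarrow> nat set \<Rightarrow> nat set \<Rightarrow> nat set \<Rightarrow> nat set" where
  "gaps_below_3m m k A J C = {1..<m} \<union> (+) m ` ({..<k} - A) \<union> {m + k}
     \<union> (+) (m + k + 1) ` J \<union> (+) (2 * m) ` C \<union> {2 * m + k}"

lemma mem_gaps_below_2m:
  "x \<in> gaps_below_2m m J \<longleftrightarrow> 0 < x \<and> x < m \<or> m < x \<and> x - (m + 1) \<in> J"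
  unfolding gaps_below_2m_def Un_iff mem_image_plus_nat by auto

lemma mem_gaps_below_3m:
  "x \<in> gaps_below_3m m k A J C \<longleftrightarrow> 0 < x \<and> x < m \<or> m \<le> x \<and> x < m + k \<and> x - m \<notin> A
     \<or> x = m + k \<or> m + k < x \<and> x - (m + k + 1) \<in> J \<or> 2 * m \<le> x \<and> x - 2 * m \<in> C
     \<or> x = 2 * m + k"
  unfolding gaps_below_3m_def Un_iff mem_image_plus_nat by auto

lemma complement_eq_gaps_below_2m:
  assumes "numerical_semigroup L" "frobenius L < 2 * multiplicity L"
  shows "UNIV - L = gaps_below_2m (multiplicity L) (shifted_gaps L (multiplicity L + 1) (multiplicity L - 1))"
proof (rule set_eqI)
  fix x
  let ?m = "multiplicity L"
  have "0 \<in> L" "?m \<in> L" using assms(1) multiplicity_in by (auto simp: numerical_semigroup_def)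
  moreover have "x < 2 * ?m \<or> x \<in> L"
    using greater_frobenius_in[OF assms(1), of x] assms(2) by linarith
  moreover have "x = 0 \<or> ?m \<le> x \<or> x \<notin> L" using less_multiplicity_notin by fastforce
  ultimately show "x \<in> UNIV - L \<longleftrightarrow> x \<in> gaps_below_2m ?m (shifted_gaps L (?m + 1) (?m - 1))"
    unfolding mem_gaps_below_2m shifted_gaps_def by (cases "x = 0"; cases "x = ?m") auto
qed

lemma card_gaps_below_2m: "finite J \<Longrightarrow> card (gaps_below_2m m J) = m - 1 + card J"
  unfolding gaps_below_2m_def by (subst card_Un_disjoint) (auto simp: card_image inj_on_def)

lemma complement_eq_gaps_below_3m:
  assumes "numerical_semigroup L" "L \<noteq> UNIV"
    and "frobenius L = 2 * multiplicity L + k" "k < multiplicity L"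
  shows "UNIV - L = gaps_below_3m (multiplicity L) k {a. a < k \<and> multiplicity L + a \<in> L}
    (shifted_gaps L (multiplicity L + k + 1) (multiplicity L - k - 1))
    (shifted_gaps L (2 * multiplicity L) k)"
proof (rule set_eqI)
  fix x
  let ?m = "multiplicity L"
  have f: "2 * ?m + k \<notin> L" using frobenius_notin[OF assms(1,2)] assms(3) by simp
  have "?m + k \<notin> L"
    using numerical_semigroup_add[OF assms(1) multiplicity_in(1)[OF assms(1)], of "?m + k"] f
    by (auto simp: add_ac mult_2)
  moreover have "0 \<in> L" using assms(1) by (simp add: numerical_semigroup_def)
  moreover have "x \<le> 2 * ?m + k \<or> x \<in> L"
    using greater_frobenius_in[OF assms(1), of x] assms(3) by linarith
  moreover have "x = 0 \<or> ?m \<le> x \<or> x \<notin> L" using less_multiplicity_notin by fastforce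
  ultimately show "x \<in> UNIV - L \<longleftrightarrow> x \<in> gaps_below_3m ?m k {a. a < k \<and> ?m + a \<in> L}
    (shifted_gaps L (?m + k + 1) (?m - k - 1)) (shifted_gaps L (2 * ?m) k)"
    unfolding mem_gaps_below_3m shifted_gaps_def using f assms(4)
    by auto
qed

lemma card_gaps_below_3m:
  assumes "A \<subseteq> {..<k}" "J \<subseteq> {..<m - k - 1}" "C \<subseteq> {..<k}" "k < m"
  shows "card (gaps_below_3m m k A J C) = m - 1 + (k - card A) + card J + card C + 2"
proof -
  have fin: "finite A" "finite J" "finite C"
    using assms(1-3) by (auto intro: finite_subset)
  let ?P1 = "{1..<m}" and ?P2 = "(+) m ` ({..<k} - A)" and ?P4 = "(+) (m + k + 1) ` J"
    and ?P5 = "(+) (2 * m) ` C"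
  have "card (gaps_below_3m m k A J C)
      = card (?P1 \<union> ?P2 \<union> {m + k} \<union> ?P4 \<union> ?P5) + card {2 * m + k}"
    unfolding gaps_below_3m_def using fin assms
    by (intro card_Un_at_split[where c = "2 * m + k"]) auto
  also have "card (?P1 \<union> ?P2 \<union> {m + k} \<union> ?P4 \<union> ?P5) = card (?P1 \<union> ?P2 \<union> {m + k} \<union> ?P4) + card ?P5"
    using fin assms by (intro card_Un_at_split[where c = "2 * m"]) auto
  also have "card (?P1 \<union> ?P2 \<union> {m + k} \<union> ?P4) = card (?P1 \<union> ?P2 \<union> {m + k}) + card ?P4"
    using fin assms by (intro card_Un_at_split[where c = "m + k + 1"]) auto
  also have "card (?P1 \<union> ?P2 \<union> {m + k}) = card (?P1 \<union> ?P2) + card {m + k}"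
    using fin by (intro card_Un_at_split[where c = "m + k"]) auto
  also have "card (?P1 \<union> ?P2) = card ?P1 + card ?P2"
    using fin by (intro card_Un_at_split[where c = m]) auto
  also have "card ?P2 = k - card A"
    using assms(1) fin by (simp add: card_image card_Diff_subset)
  finally show ?thesis using fin by (simp add: card_image inj_on_def)
qed

lemma not_UNIV_if_genus_pos: "1 \<le> genus L \<Longrightarrow> L \<noteq> UNIV"
  by (auto simp: genus_def)

lemma shifted_elements_in_AA:
  assumes "numerical_semigroup L" "L \<noteq> UNIV"
    and "frobenius L = 2 * multiplicity L + k" "0 < k"
  shows "{a. a < k \<and> multiplicity L + a \<in> L} \<in> AA k"
proof -
  let ?A = "{a. a < k \<and> multiplicity L + a \<in> L}"
  have "k \<notin> sumset ?A"
    using sumset_shift_in[OF assms(1), of ?A] frobenius_notin[OF assms(1,2)] assms(3) by auto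
  moreover have "0 \<in> ?A" using multiplicity_in[OF assms(1)] assms(4) by simp
  ultimately show ?thesis by (auto simp: AA_def)
qed

definition frob_lt_2m_semigroups :: "nat \<Rightarrow> nat set set" where
  "frob_lt_2m_semigroups g =
    {L. numerical_semigroup L \<and> genus L = g \<and> frobenius L < 2 * multiplicity L}"

definition frob_excess_semigroups :: "nat \<Rightarrow> nat \<Rightarrow> nat set \<Rightarrow> nat set set" where
  "frob_excess_semigroups g k A =
    {L. numerical_semigroup L \<and> genus L = g \<and> frobenius L = 2 * multiplicity L + k
      \<and> k < multiplicity L \<and> {a. a < k \<and> multiplicity L + a \<in> L} = A}"

lemma frob_lt_3m_semigroup_cases:
  assumes "numerical_semigroup L" "1 \<le> genus L" "frobenius L < 3 * multiplicity L"
  shows "L \<in> frob_lt_2m_semigroups (genus L) \<union>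
    (\<Union>k\<in>{1..genus L - 1}. \<Union>A\<in>AA k. frob_excess_semigroups (genus L) k A)"
proof (cases "frobenius L < 2 * multiplicity L")
  case True
  then show ?thesis using assms(1) by (simp add: frob_lt_2m_semigroups_def)
next
  case False
  have L: "L \<noteq> UNIV" using not_UNIV_if_genus_pos assms(2) .
  define k where "k = frobenius L - 2 * multiplicity L"
  have "frobenius L \<noteq> 2 * multiplicity L"
    using frobenius_neq_twice_multiplicity[OF assms(1) L] .
  then have f: "frobenius L = 2 * multiplicity L + k" "0 < k" "k < multiplicity L"
    using False assms(3) by (auto simp: k_def)
  then have "multiplicity L \<le> genus L"
    using multiplicity_le_genus[OF assms(1) L] by simp
  then have "k \<in> {1..genus L - 1}" using f by auto
  moreover have "L \<in> frob_excess_semigroups (genus L) k {a. a < k \<and> multiplicity L + a \<in> L}"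
    using assms(1) f by (simp add: frob_excess_semigroups_def)
  ultimately show ?thesis using shifted_elements_in_AA[OF assms(1) L f(1,2)] by blast
qed

lemma card_frob_lt_2m_semigroups:
  "finite (frob_lt_2m_semigroups g)" "card (frob_lt_2m_semigroups g) \<le> F (int g + 1)"
proof -
  let ?X = "frob_lt_2m_semigroups g"
  let ?\<phi> = "\<lambda>L. (multiplicity L - 1, shifted_gaps L (multiplicity L + 1) (multiplicity L - 1), {})"
  have gaps: "UNIV - L = gaps_below_2m (multiplicity L) (fst (snd (?\<phi> L)))" if "L \<in> ?X" for L
    using complement_eq_gaps_below_2m that by (simp add: frob_lt_2m_semigroups_def)
  have "inj_on ?\<phi> ?X"
  proof (rule inj_onI)
    fix L1 L2 assume L: "L1 \<in> ?X" "L2 \<in> ?X" and eq: "?\<phi> L1 = ?\<phi> L2"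
    then have "multiplicity L1 = multiplicity L2"
      using multiplicity_in(2) by (force simp: frob_lt_2m_semigroups_def)
    then have "UNIV - L1 = UNIV - L2" using gaps[OF L(1)] gaps[OF L(2)] eq by simp
    then show "L1 = L2" by blast
  qed
  moreover have "?\<phi> ` ?X \<subseteq> weighted_triples {} g"
  proof safe
    fix L assume L: "L \<in> ?X"
    have "g = card (UNIV - L)" using L by (simp add: frob_lt_2m_semigroups_def genus_def)
    also have "\<dots> = multiplicity L - 1 + card (shifted_gaps L (multiplicity L + 1) (multiplicity L - 1))"
      using gaps[OF L] by (simp add: card_gaps_below_2m finite_shifted_gaps)
    finally show "?\<phi> L \<in> weighted_triples {} g"
      by (simp add: weighted_triples_def shifted_gaps_subset)
  qed
  ultimately show "finite ?X" "card ?X \<le> F (int g + 1)"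
    using card_le_F_if_inj_on_weighted_triples[of ?\<phi> ?X "{}" g] by simp_all
qed


lemma card_frob_excess_semigroups:
  assumes "1 \<le> g" "A \<in> AA k"
  shows "finite (frob_excess_semigroups g k A)"
    "card (frob_excess_semigroups g k A)
      \<le> F (int g - int (card (sumset A \<inter> {0..k})) + int (card A) - int k - 1)"
proof -
  let ?X = "frob_excess_semigroups g k A"
  let ?S = "{..<k} - sumset A"
  let ?J = "\<lambda>L. shifted_gaps L (multiplicity L + k + 1) (multiplicity L - k - 1)"
  let ?C = "\<lambda>L. shifted_gaps L (2 * multiplicity L) k"
  let ?\<phi> = "\<lambda>L. (multiplicity L - k - 1, ?J L, ?C L)"
  have "0 \<in> A" "k \<notin> sumset A" using assms(2) by (auto simp: AA_def)
  moreover from this(1) have "0 + 0 \<in> sumset A" unfolding sumset_def by blast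
  ultimately have "0 < k" by (metis add_0 gr0I)
  then have A: "A \<subseteq> {..<k}" "k \<notin> sumset A" using assms(2) by (auto simp: AA_def)
  have X: "numerical_semigroup L" "L \<noteq> UNIV" "genus L = g" "k < multiplicity L"
    "A = {a. a < k \<and> multiplicity L + a \<in> L}" if "L \<in> ?X" for L
    using that assms(1) not_UNIV_if_genus_pos by (auto simp: frob_excess_semigroups_def)
  have gaps: "UNIV - L = gaps_below_3m (multiplicity L) k A (?J L) (?C L)" if "L \<in> ?X" for L
    using complement_eq_gaps_below_3m X[OF that] that by (simp add: frob_excess_semigroups_def)
  have genus: "g = multiplicity L - 1 + (k - card A) + card (?J L) + card (?C L) + 2"
    if "L \<in> ?X" for L
    using X[OF that] gaps[OF that] A(1)
    by (simp add: genus_def card_gaps_below_3m shifted_gaps_subset)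
  have "card A \<le> k" using card_mono[OF _ A(1)] by simp
  have "inj_on ?\<phi> ?X"
  proof (rule inj_onI)
    fix L1 L2 assume L: "L1 \<in> ?X" "L2 \<in> ?X" and eq: "?\<phi> L1 = ?\<phi> L2"
    then have "multiplicity L1 = multiplicity L2" using X(4)[OF L(1)] X(4)[OF L(2)] by auto
    then have "UNIV - L1 = UNIV - L2" using gaps[OF L(1)] gaps[OF L(2)] eq by simp
    then show "L1 = L2" by blast
  qed
  moreover have "?\<phi> ` ?X \<subseteq> weighted_triples ?S (g + card A - 2 * k - 2)"
  proof safe
    fix L assume L: "L \<in> ?X"
    have "A \<subseteq> {a. multiplicity L + a \<in> L}" using X(5)[OF L] by blast
    then have "?C L \<inter> sumset A = {}"
      using sumset_shift_in[OF X(1)[OF L]] by (auto simp: shifted_gaps_def)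
    then have "?C L \<subseteq> ?S" using shifted_gaps_subset by blast
    then show "?\<phi> L \<in> weighted_triples ?S (g + card A - 2 * k - 2)"
      using genus[OF L] X(4)[OF L] \<open>card A \<le> k\<close>
      by (auto simp: weighted_triples_def shifted_gaps_subset)
  qed
  ultimately have "finite ?X" and bound: "card ?X \<le> F (int (g + card A - 2 * k - 2) + int (card ?S) + 1)"
    using card_le_F_if_inj_on_weighted_triples[of ?\<phi> ?X ?S] by simp_all
  then show "finite ?X" by simp
  show "card ?X \<le> F (int g - int (card (sumset A \<inter> {0..k})) + int (card A) - int k - 1)"
  proof (cases "?X = {}")
    case False
    then obtain L where "L \<in> ?X" by blast
    then have "2 * k + 2 \<le> g + card A" using genus X(4) \<open>card A \<le> k\<close> by fastforce
    moreover have "sumset A \<inter> {0..k} = {..<k} \<inter> sumset A" using A(2) by (auto simp: le_less)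
    moreover have "card (sumset A \<inter> {0..k}) \<le> k"
      using card_mono[of "{..<k}" "{..<k} \<inter> sumset A"] calculation(2) by simp
    ultimately have index: "int (g + card A - 2 * k - 2) + int (card ?S) + 1
        = int g - int (card (sumset A \<inter> {0..k})) + int (card A) - int k - 1"
      by (simp add: card_Diff_subset_Int of_nat_diff)
    show ?thesis using bound unfolding index .
  qed simp
qed


lemma finite_AA: "finite (AA k)"
  by (rule finite_subset[of _ "Pow {0..k - 1}"]) (auto simp: AA_def)

theorem lemma3p9:
  fixes g :: nat
  assumes "g \<ge> 1"
  shows "t g \<le> F (int g + 1) +
    (\<Sum>k = 1..g-1. \<Sum>A \<in> AA k.
       F (int g - int (card (sumset A \<inter> {0..k})) + int (card A) - int k - 1))"
proof -
  let ?T2 = "frob_lt_2m_semigroups g"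
  let ?T3 = "frob_excess_semigroups g"
  let ?U = "\<Union>k\<in>{1..g-1}. \<Union>A\<in>AA k. ?T3 k A"
  have "{L. numerical_semigroup L \<and> genus L = g \<and> frobenius L < 3 * multiplicity L} \<subseteq> ?T2 \<union> ?U"
    using frob_lt_3m_semigroup_cases assms by fastforce
  then have "t g \<le> card (?T2 \<union> ?U)"
    unfolding t_def using card_frob_lt_2m_semigroups(1) card_frob_excess_semigroups(1)[OF assms]
    by (intro card_mono) (auto intro: finite_AA)
  also have "\<dots> \<le> card ?T2 + card ?U" by (rule card_Un_le)
  also have "card ?U \<le> (\<Sum>k = 1..g-1. \<Sum>A \<in> AA k. card (?T3 k A))"
    by (intro card_UN_le[THEN order_trans] sum_mono card_UN_le finite_AA) simp
  also have "\<dots> \<le> (\<Sum>k = 1..g-1. \<Sum>A \<in> AA k.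
       F (int g - int (card (sumset A \<inter> {0..k})) + int (card A) - int k - 1))"
    using card_frob_excess_semigroups(2)[OF assms] by (intro sum_mono)
  finally show ?thesis using card_frob_lt_2m_semigroups(2)[of g] by linarith
qed

end
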